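(* Let $p$ be prime, $d>1$ an integer, $N\ge1$, and let $P_d^N$ be the degree-$d$ powering map ($(x_1,\dots,x_N)\mapsto(x_1^d,\dots,x_N^d)$ on $\mathbb{A}^N$, $[x_0:\cdots:x_N]\mapsto[x_0^d:\cdots:x_N^d]$ on $\mathbb{P}^N$). Let $m^-$ be the largest divisor of $p-1$ relatively prime to $d$. For a positive integer $k$ let $\delta_k=1$ if $k=1$ and $\delta_k=0$ otherwise, and for a divisor $e$ of $m^-$ let $o(e)$ denote the multiplicative order of $d$ modulo $e$ (with $o(1)=1$). Then for every positive integer $k$, $$\#\mathrm{Per}_k(P_d^N,\mathbb{A}^N(\mathbb{F}_p))=\delta_k+\sum_{I=1}^N\ \sum_{\substack{(k_1,\dots,k_I),\ k_i\mid m^-\\ \mathrm{lcm}(o(k_1),\dots,o(k_I))=k}}\binom{N}{I}\prod_{i=1}^I\varphi(k_i),$$ $$\#\mathrm{Per}_k(P_d^N,\mathbb{P}^N(\mathbb{F}_p))=\sum_{D=0}^N\Bigg(\delta_k+\sum_{I=1}^D\ \sum_{\substack{(k_1,\dots,k_I),\ k_i\mid m^-\\ \mathrm{lcm}(o(k_1),\dots,o(k_I))=k}}\binom{D}{I}\prod_{i=1}^I\varphi(k_i)\Bigg),$$ where $\varphi$ is Euler's totient function. Furthermore, $$\#\mathrm{Per}(P_d^N,\mathbb{A}^N(\mathbb{F}_p))=1+\sum_{I=1}^N\binom{N}{I}\sum_{\substack{(k_1,\dots,k_I)\\ k_i\mid m^-}}\prod_{i=1}^I\varphi(k_i)=(m^-+1)^N,$$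 $$\#\mathrm{Per}(P_d^N,\mathbb{P}^N(\mathbb{F}_p))=\sum_{D=0}^N\Bigg(1+\sum_{I=1}^D\binom{D}{I}\sum_{\substack{(k_1,\dots,k_I)\\ k_i\mid m^-}}\prod_{i=1}^I\varphi(k_i)\Bigg)=\sum_{D=0}^N(m^-+1)^D.$$
   Context: For a self-map $F$ of a finite set $S$, the minimal period of a periodic point $x$ is the least $n\ge1$ with $F^n(x)=x$; $\mathrm{Per}_k(F,S)$ is the set of points of $S$ of minimal period exactly $k$, and $\mathrm{Per}(F,S)=\bigcup_{k\ge1}\mathrm{Per}_k(F,S)$. Inner sums range over ordered $I$-tuples of positive divisors of $m^-$. *)

theory Defs
  imports "HOL-Number_Theory.Number_Theory"
begin

definition Per_k :: "('a \<Rightarrow> 'a) \<Rightarrow> 'a set \<Rightarrow> nat \<Rightarrow> 'a set" where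
  "Per_k F S k = {x \<in> S. k \<ge> 1 \<and> (F ^^ k) x = x \<and> (\<forall>j. 1 \<le> j \<and> j < k \<longrightarrow> (F ^^ j) x \<noteq> x)}"

definition Per :: "('a \<Rightarrow> 'a) \<Rightarrow> 'a set \<Rightarrow> 'a set" where
  "Per F S = (\<Union>k\<in>{1..}. Per_k F S k)"

(* F_p is represented by residues {0..<p}; affine space A^n(F_p) by lists of length n *)
definition affine_space :: "nat \<Rightarrow> nat \<Rightarrow> nat list set" where
  "affine_space p n = {xs. length xs = n \<and> (\<forall>a\<in>set xs. a < p)}"

definition pow_map :: "nat \<Rightarrow> nat \<Rightarrow> nat list \<Rightarrow> nat list" where
  "pow_map p d xs = map (\<lambda>a. a ^ d mod p) xs"

definition proj_class :: "nat \<Rightarrow> nat list \<Rightarrow> nat list set" where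
  "proj_class p xs = {map (\<lambda>a. c * a mod p) xs | c. c \<in> {1..<p}}"

definition proj_space :: "nat \<Rightarrow> nat \<Rightarrow> nat list set set" where
  "proj_space p n = {proj_class p xs | xs. xs \<in> affine_space p (Suc n) \<and> (\<exists>a\<in>set xs. a \<noteq> 0)}"

definition proj_pow_map :: "nat \<Rightarrow> nat \<Rightarrow> nat list set \<Rightarrow> nat list set" where
  "proj_pow_map p d C = proj_class p (pow_map p d (SOME xs. xs \<in> C))"

definition m_minus :: "nat \<Rightarrow> nat \<Rightarrow> nat" where
  "m_minus p d = (GREATEST m. m dvd (p - 1) \<and> coprime m d)"

definition div_tuples :: "nat \<Rightarrow> nat \<Rightarrow> nat list set" where
  "div_tuples m I = {ks. length ks = I \<and> (\<forall>k\<in>set ks. k dvd m)}"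

end

theory Submission
  imports Defs
begin

(* A nonzero residue a is periodic under a \<mapsto> a^d exactly when its multiplicative order
   e = ord p a is prime to d, i.e. divides m^-, and its minimal period is then the order of d
   modulo e; 0 is fixed. Each e dividing p - 1 is the order of totient e residues. On A^N the map
   acts coordinatewise, so the minimal period of a point is the lcm of the periods of its
   coordinates. Sorting points by which I coordinates are nonzero, and those coordinates by
   their orders, gives the counting formula; since totient sums to m^- over the divisors of m^-,
   the total collapses to (m^- + 1)^N. Normalising the first nonzero homogeneous coordinate to 1
   splits P^N into copies of A^0, ..., A^N, each invariant under the powering map, which
   reduces the projective counts to the affine ones. *)

section \<open>Sums over tuples\<close>

definition tuples :: "'a set \<Rightarrow> nat \<Rightarrow> 'a list set" where
  "tuples U n = {xs. length xs = n \<and> set xs \<subseteq> U}"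

lemma finite_tuples: "finite U \<Longrightarrow> finite (tuples U n)"
  unfolding tuples_def using finite_lists_length_eq[of U n] by (simp add: conj_commute)

lemma tuples_0 [simp]: "tuples U 0 = {[]}"
  by (auto simp: tuples_def)

lemma tuples_Suc: "tuples U (Suc n) = (\<lambda>(x, xs). x # xs) ` (U \<times> tuples U n)"
  by (auto simp: tuples_def length_Suc_conv)

lemma sum_tuples_Suc:
  assumes "finite U"
  shows "(\<Sum>xs\<in>tuples U (Suc n). F xs) = (\<Sum>x\<in>U. \<Sum>xs\<in>tuples U n. F (x # xs))"
proof -
  have "inj_on (\<lambda>(x, xs). x # xs) (U \<times> tuples U n)"
    by (auto simp: inj_on_def)
  then show ?thesis
    unfolding tuples_Suc by (simp add: sum.reindex sum.cartesian_product case_prod_unfold)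
qed

lemma sum_prod_list_tuples:
  fixes g :: "'a \<Rightarrow> 'b::comm_semiring_1"
  assumes "finite U"
  shows "(\<Sum>xs\<in>tuples U n. prod_list (map g xs)) = (\<Sum>x\<in>U. g x) ^ n"
proof (induction n)
  case (Suc n)
  then show ?case
    by (simp add: sum_tuples_Suc[OF assms] sum_distrib_left[symmetric] sum_distrib_right)
qed simp

lemma sum_tuples_map:
  fixes H :: "'b list \<Rightarrow> nat"
  assumes "finite V" "finite W" "f ` V \<subseteq> W"
  shows "(\<Sum>ys\<in>tuples V n. H (map f ys))
       = (\<Sum>ws\<in>tuples W n. H ws * prod_list (map (\<lambda>w. card {v \<in> V. f v = w}) ws))"
proof (induction n arbitrary: H)
  case 0
  then show ?case by simp
next
  case (Suc n)
  let ?P = "\<lambda>ws. prod_list (map (\<lambda>w. card {v \<in> V. f v = w}) ws)"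
  have "(\<Sum>ys\<in>tuples V (Suc n). H (map f ys)) = (\<Sum>v\<in>V. \<Sum>ws\<in>tuples W n. H (f v # ws) * ?P ws)"
    unfolding sum_tuples_Suc[OF assms(1)] using Suc.IH[of "\<lambda>ws. H (f _ # ws)"] by simp
  also have "\<dots> = (\<Sum>w\<in>W. \<Sum>v\<in>{v \<in> V. f v = w}. \<Sum>ws\<in>tuples W n. H (w # ws) * ?P ws)"
    using assms by (subst sum.group[symmetric]) auto
  also have "\<dots> = (\<Sum>ws\<in>tuples W (Suc n). H ws * ?P ws)"
    by (simp add: sum_tuples_Suc[OF assms(2)] sum_distrib_left mult_ac)
  finally show ?case .
qed

lemma sum_choose_Suc_shift:
  fixes T :: "nat \<Rightarrow> nat"
  shows "(\<Sum>i\<le>Suc n. (Suc n choose i) * T i)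
       = (\<Sum>i\<le>n. (n choose i) * T i) + (\<Sum>i\<le>n. (n choose i) * T (Suc i))"
proof -
  have "(\<Sum>i\<le>Suc n. (Suc n choose i) * T i)
      = (T 0 + (\<Sum>i\<le>n. (n choose Suc i) * T (Suc i))) + (\<Sum>i\<le>n. (n choose i) * T (Suc i))"
    by (subst sum.atMost_Suc_shift) (simp add: sum.distrib algebra_simps)
  also have "T 0 + (\<Sum>i\<le>n. (n choose Suc i) * T (Suc i)) = (\<Sum>i\<le>n. (n choose i) * T i)"
    using sum.atMost_Suc_shift[of "\<lambda>i. (n choose i) * T i" n] by (simp add: binomial_eq_0)
  finally show ?thesis .
qed

lemma sum_tuples_insert_filter:
  fixes H :: "'a list \<Rightarrow> nat"
  assumes "finite V" "z \<notin> V"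
  shows "(\<Sum>xs\<in>tuples (insert z V) n. H (filter (\<lambda>x. x \<noteq> z) xs))
       = (\<Sum>i\<le>n. (n choose i) * (\<Sum>ys\<in>tuples V i. H ys))"
proof (induction n arbitrary: H)
  case 0
  then show ?case by simp
next
  case (Suc n)
  let ?T = "\<lambda>H i. \<Sum>ys\<in>tuples V i. H ys"
  have "(\<Sum>xs\<in>tuples (insert z V) (Suc n). H (filter (\<lambda>x. x \<noteq> z) xs))
      = (\<Sum>i\<le>n. (n choose i) * ?T H i)
        + (\<Sum>v\<in>V. \<Sum>i\<le>n. (n choose i) * ?T (\<lambda>ys. H (v # ys)) i)"
  proof -
    have "v \<in> V \<Longrightarrow> v \<noteq> z" for v
      using assms(2) by blast
    then show ?thesis
      using assms Suc.IH[of H] Suc.IH[of "\<lambda>ys. H (_ # ys)"]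
      by (simp add: sum_tuples_Suc cong: sum.cong_simp)
  qed
  also have "(\<Sum>v\<in>V. \<Sum>i\<le>n. (n choose i) * ?T (\<lambda>ys. H (v # ys)) i)
      = (\<Sum>i\<le>n. (n choose i) * ?T H (Suc i))"
    by (simp add: sum_tuples_Suc[OF assms(1)] sum.swap[of _ V] sum_distrib_left)
  finally show ?case
    by (simp only: sum_choose_Suc_shift)
qed

lemma card_filter_eq_sum: "finite A \<Longrightarrow> card {x \<in> A. P x} = (\<Sum>x\<in>A. if P x then 1 else 0)"
  using sum.inter_filter[of A "\<lambda>_. 1 :: nat" P] by simp

lemma Lcm_map_filter:
  fixes f :: "'a \<Rightarrow> nat"
  assumes "f z = 1"
  shows "Lcm (set (map f (filter (\<lambda>x. x \<noteq> z) xs))) = Lcm (set (map f xs))"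
  using assms by (induction xs) auto

section \<open>Minimal periods\<close>

lemma Per_k_eq_period:
  assumes "\<And>x j. x \<in> S \<Longrightarrow> (F ^^ j) x = x \<longleftrightarrow> \<pi> x dvd j" and "k \<ge> 1"
  shows "Per_k F S k = {x \<in> S. \<pi> x = k}"
proof -
  have "(\<pi> x dvd k \<and> (\<forall>j. 1 \<le> j \<and> j < k \<longrightarrow> \<not> \<pi> x dvd j)) \<longleftrightarrow> \<pi> x = k" for x
  proof
    assume minimal: "\<pi> x dvd k \<and> (\<forall>j. 1 \<le> j \<and> j < k \<longrightarrow> \<not> \<pi> x dvd j)"
    then have "1 \<le> \<pi> x" "\<pi> x \<le> k"
      using \<open>k \<ge> 1\<close> by (auto intro: dvd_imp_le Nat.gr0I)
    then show "\<pi> x = k"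
      using minimal by force
  qed (auto dest: dvd_imp_le)
  then show ?thesis
    using assms by (auto simp: Per_k_def)
qed

lemma Per_eq_period:
  assumes "\<And>x j. x \<in> S \<Longrightarrow> (F ^^ j) x = x \<longleftrightarrow> \<pi> x dvd j"
  shows "Per F S = {x \<in> S. \<pi> x \<noteq> 0}"
  using Per_k_eq_period[OF assms] by (auto simp: Per_def)

lemma Per_k_conj:
  assumes "bij_betw h X Y" "G ` X \<subseteq> X" "\<And>x. x \<in> X \<Longrightarrow> F (h x) = h (G x)"
  shows "Per_k F Y k = h ` Per_k G X k"
proof -
  have iter: "(F ^^ j) (h x) = h ((G ^^ j) x) \<and> (G ^^ j) x \<in> X" if "x \<in> X" for x j
    using that assms(2,3) by (induction j) auto
  have "(F ^^ j) (h x) = h x \<longleftrightarrow> (G ^^ j) x = x" if "x \<in> X" for x j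
    using iter[OF that] that assms(1) by (auto simp: bij_betw_def dest: inj_onD)
  then show ?thesis
    using assms(1) by (auto simp: Per_k_def bij_betw_def)
qed

lemma card_Per_k_conj:
  assumes "bij_betw h X Y" "G ` X \<subseteq> X" "\<And>x. x \<in> X \<Longrightarrow> F (h x) = h (G x)"
  shows "card (Per_k F Y k) = card (Per_k G X k)"
proof -
  have "inj_on h (Per_k G X k)"
    by (rule inj_on_subset[OF bij_betw_imp_inj_on[OF assms(1)]]) (auto simp: Per_k_def)
  then show ?thesis
    using Per_k_conj[where h = h and G = G and F = F, OF assms] by (simp add: card_image)
qed

lemma card_Per_conj:
  assumes "bij_betw h X Y" "G ` X \<subseteq> X" "\<And>x. x \<in> X \<Longrightarrow> F (h x) = h (G x)"
  shows "card (Per F Y) = card (Per G X)"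
proof -
  have "Per F Y = h ` Per G X"
    by (simp add: Per_def image_UN Per_k_conj[where h = h and G = G and F = F, OF assms])
  moreover have "inj_on h (Per G X)"
    by (rule inj_on_subset[OF bij_betw_imp_inj_on[OF assms(1)]]) (auto simp: Per_def Per_k_def)
  ultimately show ?thesis
    by (simp add: card_image)
qed

lemma funpow_apsnd: "(apsnd (F :: 'a \<Rightarrow> 'a) ^^ j) (i, y) = (i, (F ^^ j) y)"
  by (induction j) simp_all

lemma Per_k_apsnd: "Per_k (apsnd F) (Sigma A S) k = Sigma A (\<lambda>i. Per_k F (S i) k)"
  by (auto simp: Per_k_def funpow_apsnd)

lemma Per_apsnd: "Per (apsnd F) (Sigma A S) = Sigma A (\<lambda>i. Per F (S i))"
  by (auto simp: Per_def Per_k_apsnd)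

section \<open>The powering map modulo a prime\<close>

lemma m_minus_greatest:
  assumes "p > 1"
  shows "m_minus p d dvd p - 1 \<and> coprime (m_minus p d) d"
    and "e dvd p - 1 \<Longrightarrow> coprime e d \<Longrightarrow> e \<le> m_minus p d"
proof -
  have bound: "m \<le> p - 1" if "m dvd p - 1" for m
    using that assms by (simp add: dvd_imp_le)
  show "m_minus p d dvd p - 1 \<and> coprime (m_minus p d) d"
    unfolding m_minus_def by (rule GreatestI_nat[of _ 1]) (use bound in auto)
  show "e dvd p - 1 \<Longrightarrow> coprime e d \<Longrightarrow> e \<le> m_minus p d"
    unfolding m_minus_def by (rule Greatest_le_nat) (use bound in auto)
qed

lemma m_minus_dvd: "p > 1 \<Longrightarrow> m_minus p d dvd p - 1"
  using m_minus_greatest(1) by blast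

lemma m_minus_pos: "p > 1 \<Longrightarrow> m_minus p d > 0"
  using m_minus_dvd[of p d] by (auto intro!: Nat.gr0I)

lemma dvd_m_minus_iff:
  assumes "p > 1" "e dvd p - 1"
  shows "e dvd m_minus p d \<longleftrightarrow> coprime e d"
proof
  assume "e dvd m_minus p d"
  then show "coprime e d"
    using coprime_divisors[OF \<open>e dvd m_minus p d\<close> dvd_refl] m_minus_greatest(1)[OF assms(1)]
    by blast
next
  assume "coprime e d"
  let ?l = "lcm e (m_minus p d)"
  have "coprime (e * m_minus p d) d"
    using m_minus_greatest(1)[OF assms(1)] \<open>coprime e d\<close> by simp
  moreover have "?l dvd e * m_minus p d"
    by (simp add: lcm_least)
  ultimately have "coprime ?l d"
    using coprime_divisors[OF _ dvd_refl] by blast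
  have "?l dvd p - 1"
    using assms m_minus_greatest(1)[OF assms(1)] by (simp add: lcm_least)
  with \<open>coprime ?l d\<close> have "?l \<le> m_minus p d"
    by (intro m_minus_greatest(2)[OF assms(1)])
  moreover have "m_minus p d \<le> ?l"
    using assms(1) by (intro dvd_imp_le dvd_lcm2 dvd_pos_nat[OF _ \<open>?l dvd p - 1\<close>]) simp
  ultimately have "?l = m_minus p d"
    by simp
  then show "e dvd m_minus p d"
    using dvd_lcm1[of e "m_minus p d"] by simp
qed

(* Minimal period of a under a \<mapsto> a^d mod p, with 0 for points that are not periodic
   (ord returns 0 when its arguments are not coprime). *)
definition pow_period :: "nat \<Rightarrow> nat \<Rightarrow> nat \<Rightarrow> nat" where
  "pow_period p d a = (if a = 0 then 1 else ord (ord p a) d)"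

lemma pow_period_0: "pow_period p d 0 = 1"
  by (simp add: pow_period_def)

lemma funpow_power_mod:
  fixes a p d :: nat
  assumes "a < p"
  shows "((\<lambda>a. a ^ d mod p) ^^ j) a = a ^ (d ^ j) mod p"
proof (induction j)
  case (Suc j)
  have "(a ^ d ^ j mod p) ^ d mod p = a ^ (d ^ j * d) mod p"
    by (simp only: power_mod power_mult)
  then show ?case
    using Suc by (simp add: mult.commute)
qed (use assms in simp)

lemma funpow_power_mod_eq_iff:
  assumes "prime p" "d > 0" "a < p"
  shows "((\<lambda>a. a ^ d mod p) ^^ j) a = a \<longleftrightarrow> pow_period p d a dvd j"
proof (cases "a = 0")
  case True
  then show ?thesis
    using assms by (simp add: funpow_power_mod pow_period_def power_0_left)
next
  case False
  have "coprime a p"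
    using assms False by (metis prime_nat_iff'' coprime_commute neq0_conv)
  have "d ^ j \<ge> 1"
    using assms by simp
  then have "a ^ d ^ j = a * a ^ (d ^ j - 1)"
    by (cases "d ^ j") simp_all
  then have "((\<lambda>a. a ^ d mod p) ^^ j) a = a \<longleftrightarrow> [a * a ^ (d ^ j - 1) = a * 1] (mod p)"
    using assms by (simp add: funpow_power_mod cong_def)
  also have "\<dots> \<longleftrightarrow> [a ^ (d ^ j - 1) = 1] (mod p)"
    using \<open>coprime a p\<close> by (rule cong_mult_lcancel_nat)
  also have "\<dots> \<longleftrightarrow> ord p a dvd d ^ j - 1"
    by (rule ord_divides)
  also have "\<dots> \<longleftrightarrow> [d ^ j = 1] (mod ord p a)"
    using \<open>d ^ j \<ge> 1\<close> by (simp add: cong_altdef_nat)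
  also have "\<dots> \<longleftrightarrow> pow_period p d a dvd j"
    using False by (simp add: ord_divides' pow_period_def)
  finally show ?thesis .
qed

lemma funpow_pow_map: "(pow_map p d ^^ j) xs = map ((\<lambda>a. a ^ d mod p) ^^ j) xs"
  by (induction j) (auto simp: pow_map_def)

lemma funpow_pow_map_eq_iff:
  assumes "prime p" "d > 0" "xs \<in> affine_space p N"
  shows "(pow_map p d ^^ j) xs = xs \<longleftrightarrow> Lcm (set (map (pow_period p d) xs)) dvd j"
proof -
  have "(pow_map p d ^^ j) xs = xs \<longleftrightarrow> (\<forall>a\<in>set xs. ((\<lambda>a. a ^ d mod p) ^^ j) a = a)"
    unfolding funpow_pow_map using map_eq_conv[of _ xs "\<lambda>x. x"] by simp
  then show ?thesis
    using assms funpow_power_mod_eq_iff[OF assms(1,2)] by (auto simp: affine_space_def Lcm_dvd_iff)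
qed

lemma ord_dvd_prime_minus_one:
  assumes "prime p" "a \<in> {0<..<p}"
  shows "ord p a dvd p - 1"
  using order_divides_totient[of p a] assms
  by (simp add: totient_prime prime_nat_iff'' coprime_commute)

lemma card_ord_eq_totient:
  assumes "prime p" "e dvd p - 1"
  shows "card {a \<in> {0<..<p}. ord p a = e} = totient e"
  using prime_card_elements_with_ord_eq_totient[of p e] assms prime_gt_1_nat[of p]
  by (simp add: totatives_prime)

lemma div_tuples_eq_tuples: "div_tuples m I = tuples {e. e dvd m} I"
  by (auto simp: div_tuples_def tuples_def)

lemma sum_tuples_divisors_restrict_m_minus:
  assumes "p > 1" "g 0 = 0"
  shows "(\<Sum>ks\<in>tuples {e. e dvd p - 1} I. g (Lcm (set (map (\<lambda>e. ord e d) ks))) * prod_list (map totient ks))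
       = (\<Sum>ks\<in>div_tuples (m_minus p d) I.
            g (Lcm (set (map (\<lambda>e. ord e d) ks))) * prod_list (map totient ks))"
    (is "(\<Sum>ks\<in>tuples ?W I. ?f ks) = _")
  unfolding div_tuples_eq_tuples
proof (rule sum.mono_neutral_right)
  show "tuples {e. e dvd m_minus p d} I \<subseteq> tuples ?W I"
    using m_minus_dvd[OF assms(1)] by (auto simp: tuples_def intro: dvd_trans)
  show "\<forall>ks \<in> tuples ?W I - tuples {e. e dvd m_minus p d} I. ?f ks = 0"
  proof
    fix ks assume "ks \<in> tuples ?W I - tuples {e. e dvd m_minus p d} I"
    then obtain e where "e \<in> set ks" "e dvd p - 1" "\<not> e dvd m_minus p d"
      by (auto simp: tuples_def)
    then have "0 \<in> set (map (\<lambda>e. ord e d) ks)"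
      using dvd_m_minus_iff[OF assms(1)] by (force simp: ord_eq_0)
    then show "?f ks = 0"
      using assms(2) by simp
  qed
qed (use assms(1) in \<open>auto intro: finite_tuples\<close>)

lemma sum_tuples_Lcm_pow_period:
  assumes "prime p" "g 0 = 0"
  shows "(\<Sum>ys\<in>tuples {0<..<p} I. g (Lcm (set (map (pow_period p d) ys))))
       = (\<Sum>ks\<in>div_tuples (m_minus p d) I.
            g (Lcm (set (map (\<lambda>e. ord e d) ks))) * prod_list (map totient ks))"
    (is "?lhs = (\<Sum>ks\<in>_. ?h ks * _)")
proof -
  let ?W = "{e. e dvd p - 1}"
  have "map (pow_period p d) ys = map (\<lambda>e. ord e d) (map (ord p) ys)"
    if "ys \<in> tuples {0<..<p} I" for ys
    unfolding map_map by (rule map_cong) (use that in \<open>auto simp: tuples_def pow_period_def\<close>)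
  then have "?lhs = (\<Sum>ys\<in>tuples {0<..<p} I. ?h (map (ord p) ys))"
    by simp
  also have "\<dots> = (\<Sum>ks\<in>tuples ?W I. ?h ks * prod_list (map (\<lambda>e. card {a \<in> {0<..<p}. ord p a = e}) ks))"
    using ord_dvd_prime_minus_one[OF assms(1)] prime_gt_1_nat[OF assms(1)]
    by (intro sum_tuples_map) auto
  also have "\<dots> = (\<Sum>ks\<in>tuples ?W I. ?h ks * prod_list (map totient ks))"
  proof (intro sum.cong refl arg_cong[where f = "\<lambda>x. _ * prod_list x"] map_cong)
    show "card {a \<in> {0<..<p}. ord p a = e} = totient e" if "ks \<in> tuples ?W I" "e \<in> set ks" for ks e
      using that card_ord_eq_totient[OF assms(1)] by (auto simp: tuples_def)
  qed
  finally show ?thesis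
    using sum_tuples_divisors_restrict_m_minus[where g = g, OF prime_gt_1_nat[OF assms(1)] assms(2)]
    by simp
qed

lemma affine_space_eq_tuples: "affine_space p N = tuples {..<p} N"
  by (auto simp: affine_space_def tuples_def)

lemma sum_affine_space_Lcm_pow_period:
  assumes "prime p" "g 0 = 0"
  shows "(\<Sum>xs\<in>affine_space p N. g (Lcm (set (map (pow_period p d) xs))))
       = g 1 + (\<Sum>I=1..N. (N choose I) * (\<Sum>ks\<in>div_tuples (m_minus p d) I.
                 g (Lcm (set (map (\<lambda>e. ord e d) ks))) * prod_list (map totient ks)))"
proof -
  let ?G = "\<lambda>ys. g (Lcm (set (map (pow_period p d) ys)))"
  have "{..<p} = insert 0 {0<..<p}"
    using prime_gt_1_nat[OF assms(1)] by auto
  then have "affine_space p N = tuples (insert 0 {0<..<p}) N"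
    by (simp add: affine_space_eq_tuples)
  moreover have "?G xs = ?G (filter (\<lambda>x. x \<noteq> 0) xs)" for xs
    by (simp only: Lcm_map_filter pow_period_0)
  ultimately have "(\<Sum>xs\<in>affine_space p N. ?G xs)
      = (\<Sum>xs\<in>tuples (insert 0 {0<..<p}) N. ?G (filter (\<lambda>x. x \<noteq> 0) xs))"
    by simp
  also have "\<dots> = (\<Sum>I\<le>N. (N choose I) * (\<Sum>ys\<in>tuples {0<..<p} I. ?G ys))"
    by (rule sum_tuples_insert_filter) auto
  also have "\<dots> = ?G [] + (\<Sum>I=1..N. (N choose I) * (\<Sum>ys\<in>tuples {0<..<p} I. ?G ys))"
    by (simp add: atMost_atLeast0 sum.atLeast_Suc_atMost)
  finally show ?thesis
    using sum_tuples_Lcm_pow_period[where g = g, OF assms] by simp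
qed

section \<open>Affine space\<close>

lemma Per_k_pow_map:
  assumes "prime p" "d > 0" "k \<ge> 1"
  shows "Per_k (pow_map p d) (affine_space p N) k
       = {xs \<in> affine_space p N. Lcm (set (map (pow_period p d) xs)) = k}"
  using funpow_pow_map_eq_iff[OF assms(1,2)] assms(3) by (rule Per_k_eq_period)

lemma Per_pow_map:
  assumes "prime p" "d > 0"
  shows "Per (pow_map p d) (affine_space p N)
       = {xs \<in> affine_space p N. Lcm (set (map (pow_period p d) xs)) \<noteq> 0}"
  using funpow_pow_map_eq_iff[OF assms] by (rule Per_eq_period)

lemma finite_affine_space: "finite (affine_space p N)"
  by (simp add: affine_space_eq_tuples finite_tuples)

lemma card_Per_k_pow_map:
  assumes "prime p" "d > 0" "k \<ge> 1"
  shows "card (Per_k (pow_map p d) (affine_space p N) k)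
       = (if k = 1 then 1 else 0)
         + (\<Sum>I=1..N. \<Sum>ks\<in>{ks \<in> div_tuples (m_minus p d) I. Lcm (set (map (\<lambda>e. ord e d) ks)) = k}.
              (N choose I) * prod_list (map totient ks))"
proof -
  let ?g = "\<lambda>L::nat. if L = k then 1 else 0"
  let ?L = "\<lambda>ks. Lcm (set (map (\<lambda>e. ord e d) ks))"
  have "card (Per_k (pow_map p d) (affine_space p N) k)
      = (\<Sum>xs\<in>affine_space p N. ?g (Lcm (set (map (pow_period p d) xs))))"
    by (simp add: Per_k_pow_map[OF assms] card_filter_eq_sum finite_affine_space)
  also have "\<dots> = ?g 1 + (\<Sum>I=1..N. (N choose I) *
                (\<Sum>ks\<in>div_tuples (m_minus p d) I. ?g (?L ks) * prod_list (map totient ks)))"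
    using assms(3) by (intro sum_affine_space_Lcm_pow_period assms(1)) simp
  also have "\<dots> = (if k = 1 then 1 else 0) + (\<Sum>I=1..N. \<Sum>ks\<in>{ks \<in> div_tuples (m_minus p d) I. ?L ks = k}.
                 (N choose I) * prod_list (map totient ks))"
  proof -
    have "finite (div_tuples (m_minus p d) I)" for I
      using m_minus_pos[OF prime_gt_1_nat[OF assms(1)]]
      by (simp add: div_tuples_eq_tuples finite_tuples)
    then show ?thesis
      by (auto simp: sum.inter_filter sum_distrib_left intro!: sum.cong)
  qed
  finally show ?thesis .
qed

lemma Lcm_ord_div_tuples_neq_0:
  assumes "p > 1" "ks \<in> div_tuples (m_minus p d) I"
  shows "Lcm (set (map (\<lambda>e. ord e d) ks)) \<noteq> 0"
proof -
  have "coprime e d" if "e \<in> set ks" for e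
  proof -
    have "e dvd m_minus p d"
      using that assms(2) by (simp add: div_tuples_def)
    then show ?thesis
      using m_minus_greatest(1)[OF assms(1), of d] coprime_divisors[OF _ dvd_refl] by blast
  qed
  then show ?thesis
    by (auto simp: ord_eq_0)
qed

lemma card_Per_pow_map:
  assumes "prime p" "d > 0"
  shows "card (Per (pow_map p d) (affine_space p N))
       = 1 + (\<Sum>I=1..N. (N choose I) * (\<Sum>ks\<in>div_tuples (m_minus p d) I. prod_list (map totient ks)))"
proof -
  let ?g = "\<lambda>L::nat. if L \<noteq> 0 then 1 else 0"
  have "card (Per (pow_map p d) (affine_space p N))
      = (\<Sum>xs\<in>affine_space p N. ?g (Lcm (set (map (pow_period p d) xs))))"
    by (simp add: Per_pow_map[OF assms] card_filter_eq_sum finite_affine_space)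
  also have "\<dots> = ?g 1 + (\<Sum>I=1..N. (N choose I) * (\<Sum>ks\<in>div_tuples (m_minus p d) I.
                ?g (Lcm (set (map (\<lambda>e. ord e d) ks))) * prod_list (map totient ks)))"
    by (intro sum_affine_space_Lcm_pow_period assms(1)) simp
  also have "\<dots> = 1 + (\<Sum>I=1..N. (N choose I) * (\<Sum>ks\<in>div_tuples (m_minus p d) I. prod_list (map totient ks)))"
    using Lcm_ord_div_tuples_neq_0[OF prime_gt_1_nat[OF assms(1)]] by simp
  finally show ?thesis .
qed

lemma sum_div_tuples_prod_totient:
  assumes "m > 0"
  shows "(\<Sum>ks\<in>div_tuples m I. prod_list (map totient ks)) = m ^ I"
  using assms by (simp add: div_tuples_eq_tuples sum_prod_list_tuples totient_divisor_sum)

lemma binomial_sum_div_tuples: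
  assumes "m > 0"
  shows "1 + (\<Sum>I=1..N. (N choose I) * (\<Sum>ks\<in>div_tuples m I. prod_list (map totient ks))) = (m + 1) ^ N"
proof -
  have "(m + 1) ^ N = (\<Sum>I\<le>N. (N choose I) * m ^ I)"
    using binomial_ring[of m 1 N] by simp
  also have "\<dots> = 1 + (\<Sum>I=1..N. (N choose I) * m ^ I)"
    by (simp add: atMost_atLeast0 sum.atLeast_Suc_atMost)
  finally show ?thesis
    using sum_div_tuples_prod_totient[OF assms] by simp
qed

section \<open>Projective space\<close>

lemma not_dvd_in_units: "c \<in> {1..<p} \<Longrightarrow> \<not> (p::nat) dvd c"
  by (auto dest: dvd_imp_le)

lemma mod_prime_in_units:
  assumes "prime p" "\<not> p dvd c"
  shows "c mod p \<in> {1..<(p::nat)}"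
proof -
  have "c mod p \<noteq> 0" "c mod p < p"
    using assms prime_gt_0_nat[OF assms(1)] by (simp_all add: dvd_eq_mod_eq_0)
  then show ?thesis
    by simp
qed

lemma mult_mod_in_units:
  assumes "prime p" "c \<in> {1..<p}" "c' \<in> {1..<p}"
  shows "c * c' mod p \<in> {1..<(p::nat)}"
proof -
  have "\<not> p dvd c * c'"
    using prime_dvd_mult_iff[OF assms(1)] not_dvd_in_units assms(2,3) by blast
  then show ?thesis
    by (rule mod_prime_in_units[OF assms(1)])
qed

lemma power_mod_in_units:
  assumes "prime p" "c \<in> {1..<p}"
  shows "c ^ d mod p \<in> {1..<(p::nat)}"
proof -
  have "\<not> p dvd c ^ d"
    using prime_dvd_power[OF assms(1)] not_dvd_in_units[OF assms(2)] by blast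
  then show ?thesis
    by (rule mod_prime_in_units[OF assms(1)])
qed

lemma inverse_mod_prime_exists:
  assumes "prime p" "c \<in> {1..<p}"
  obtains c' :: nat where "c' \<in> {1..<p}" "c' * c mod p = 1"
proof -
  have "coprime c p"
    using prime_imp_coprime[OF assms(1) not_dvd_in_units[OF assms(2)]] by (simp add: coprime_commute)
  then obtain x where "[c * x = 1] (mod p)"
    using cong_solve_coprime_nat by auto
  then have "x mod p * c mod p = 1"
    using prime_gt_1_nat[OF assms(1)] by (simp add: cong_def mult.commute mod_mult_right_eq)
  moreover have "\<not> p dvd x"
    using calculation by (cases "x mod p = 0") (auto simp: dvd_eq_mod_eq_0)
  ultimately show thesis
    using that mod_prime_in_units[OF assms(1)] by blast
qed

definition scale :: "nat \<Rightarrow> nat \<Rightarrow> nat list \<Rightarrow> nat list" where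
  "scale p c xs = map (\<lambda>a. c * a mod p) xs"

lemma proj_class_eq: "proj_class p xs = {scale p c xs | c. c \<in> {1..<p}}"
  by (simp add: proj_class_def scale_def)

lemma scale_scale: "scale p c (scale p c' xs) = scale p (c * c' mod p) xs"
  by (simp add: scale_def mod_mult_right_eq mod_mult_left_eq mult.assoc)

lemma scale_1: "set xs \<subseteq> {..<p} \<Longrightarrow> scale p 1 xs = xs"
  by (induction xs) (auto simp: scale_def)

lemma mem_proj_class_self:
  assumes "prime p" "set xs \<subseteq> {..<p}"
  shows "xs \<in> proj_class p xs"
proof -
  have "xs = scale p 1 xs" "1 \<in> {1..<p}"
    using scale_1[OF assms(2)] prime_gt_1_nat[OF assms(1)] by simp_all
  then show ?thesis
    unfolding proj_class_eq by blast
qed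

lemma proj_class_scale:
  assumes "prime p" "set xs \<subseteq> {..<p}" "c \<in> {1..<p}"
  shows "proj_class p (scale p c xs) = proj_class p xs"
proof -
  obtain c' where c': "c' \<in> {1..<p}" "c' * c mod p = 1"
    using inverse_mod_prime_exists[OF assms(1,3)] .
  have "scale p c' (scale p c xs) = scale p 1 xs"
    using c'(2) by (simp only: scale_scale)
  then have "scale p c' (scale p c xs) = xs"
    using assms(2) by (simp only: scale_1)
  then have rescale: "scale p b xs = scale p (b * c' mod p) (scale p c xs)" for b
    using scale_scale[of p b c' "scale p c xs"] by simp
  show ?thesis
    unfolding proj_class_eq
  proof (intro equalityI subsetI)
    fix ys assume "ys \<in> {scale p b (scale p c xs) |b. b \<in> {1..<p}}"
    then obtain b where "b \<in> {1..<p}" "ys = scale p (b * c mod p) xs"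
      by (auto simp: scale_scale)
    then show "ys \<in> {scale p b xs |b. b \<in> {1..<p}}"
      using mult_mod_in_units[OF assms(1) _ assms(3)] by blast
  next
    fix ys assume "ys \<in> {scale p b xs |b. b \<in> {1..<p}}"
    then obtain b where "b \<in> {1..<p}" "ys = scale p (b * c' mod p) (scale p c xs)"
      using rescale by blast
    then show "ys \<in> {scale p b (scale p c xs) |b. b \<in> {1..<p}}"
      using mult_mod_in_units[OF assms(1) _ c'(1)] by blast
  qed
qed

lemma pow_map_scale: "pow_map p d (scale p c xs) = scale p (c ^ d mod p) (pow_map p d xs)"
  by (simp add: pow_map_def scale_def power_mod power_mult_distrib mod_mult_eq)

lemma proj_pow_map_proj_class:
  assumes "prime p" "set xs \<subseteq> {..<p}"
  shows "proj_pow_map p d (proj_class p xs) = proj_class p (pow_map p d xs)"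
proof -
  obtain c where c: "c \<in> {1..<p}" "(SOME ys. ys \<in> proj_class p xs) = scale p c xs"
    using someI[of "\<lambda>ys. ys \<in> proj_class p xs", OF mem_proj_class_self[OF assms]]
    by (auto simp: proj_class_eq)
  have "set (pow_map p d xs) \<subseteq> {..<p}"
    using prime_gt_0_nat[OF assms(1)] by (auto simp: pow_map_def)
  then show ?thesis
    unfolding proj_pow_map_def c(2) pow_map_scale
    using assms(1) c(1) by (intro proj_class_scale power_mod_in_units)
qed

(* The cell of P^N with first nonzero coordinate at position N - D, normalised to 1. *)
definition affine_chart :: "nat \<Rightarrow> nat \<Rightarrow> nat \<times> nat list \<Rightarrow> nat list set" where
  "affine_chart p N x = proj_class p (replicate (N - fst x) 0 @ 1 # snd x)"

lemma replicate_zero_Cons_eq: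
  assumes "replicate i 0 @ (a::nat) # r = replicate i' 0 @ b # r'" "a \<noteq> 0" "b \<noteq> 0"
  shows "i = i' \<and> a = b \<and> r = r'"
  using assms
proof (induction i arbitrary: i')
  case 0
  then show ?case by (cases i') auto
next
  case (Suc i)
  then show ?case by (cases i') auto
qed

lemma split_first_nonzero:
  assumes "\<exists>a\<in>set xs. a \<noteq> (0::nat)"
  obtains i a r where "xs = replicate i 0 @ a # r" "a \<noteq> 0"
  using assms
proof (induction xs arbitrary: thesis)
  case (Cons x xs)
  show ?case
  proof (cases "x = 0")
    case True
    then show ?thesis
      using Cons by (metis replicate_Suc append_Cons set_ConsD)
  next
    case False
    then show ?thesis
      using Cons.prems(1)[of 0] by simp
  qed
qed simp

lemma inj_on_affine_chart:
  assumes "prime p"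
  shows "inj_on (affine_chart p N) (SIGMA D:{0..N}. affine_space p D)"
proof (rule inj_onI, clarsimp)
  fix D y D' y'
  assume D: "D \<le> N" "y \<in> affine_space p D" "D' \<le> N" "y' \<in> affine_space p D'"
    and eq: "affine_chart p N (D, y) = affine_chart p N (D', y')"
  have "set (replicate (N - D') 0 @ 1 # y') \<subseteq> {..<p}"
    using D(4) prime_gt_1_nat[OF assms] by (auto simp: affine_space_def)
  then have "replicate (N - D') 0 @ 1 # y' \<in> affine_chart p N (D, y)"
    using eq mem_proj_class_self[OF assms] by (simp add: affine_chart_def)
  then obtain c where c: "c \<in> {1..<p}"
    "replicate (N - D') 0 @ 1 # y' = replicate (N - D) 0 @ c # scale p c y"
    by (auto simp: affine_chart_def proj_class_eq scale_def)
  then have "N - D' = N - D" "c = 1" "y' = scale p c y"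
    using replicate_zero_Cons_eq[OF c(2)] by auto
  moreover have "scale p 1 y = y"
    using D(2) by (intro scale_1) (auto simp: affine_space_def)
  ultimately show "D = D' \<and> y = y'"
    using D(1,3) by auto
qed

lemma affine_chart_image:
  assumes "prime p"
  shows "affine_chart p N ` (SIGMA D:{0..N}. affine_space p D) = proj_space p N"
proof (intro equalityI subsetI)
  fix C assume "C \<in> affine_chart p N ` (SIGMA D:{0..N}. affine_space p D)"
  then obtain D y where "D \<le> N" "y \<in> affine_space p D"
    and C: "C = proj_class p (replicate (N - D) 0 @ 1 # y)"
    by (auto simp: affine_chart_def)
  then have "replicate (N - D) 0 @ 1 # y \<in> affine_space p (Suc N)"
    using prime_gt_1_nat[OF assms] by (auto simp: affine_space_def)
  then show "C \<in> proj_space p N"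
    unfolding proj_space_def C by fastforce
next
  fix C assume "C \<in> proj_space p N"
  then obtain xs where xs: "C = proj_class p xs" "xs \<in> affine_space p (Suc N)" "\<exists>a\<in>set xs. a \<noteq> 0"
    unfolding proj_space_def by auto
  obtain i a r where ir: "xs = replicate i 0 @ a # r" "a \<noteq> 0"
    using split_first_nonzero[OF xs(3)] .
  have "a \<in> {1..<p}" "i + Suc (length r) = Suc N"
    using xs(2) ir by (auto simp: affine_space_def)
  obtain c where c: "c \<in> {1..<p}" "c * a mod p = 1"
    using inverse_mod_prime_exists[OF assms \<open>a \<in> {1..<p}\<close>] .
  have "scale p c xs = replicate (N - length r) 0 @ 1 # scale p c r"
    using ir c \<open>i + Suc (length r) = Suc N\<close> by (auto simp: scale_def)
  then have "C = affine_chart p N (length r, scale p c r)"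
    using proj_class_scale[OF assms _ c(1), of xs] xs(1,2) by (auto simp: affine_chart_def affine_space_def)
  moreover have "(length r, scale p c r) \<in> (SIGMA D:{0..N}. affine_space p D)"
    using \<open>i + Suc (length r) = Suc N\<close> prime_gt_0_nat[OF assms]
    by (auto simp: affine_space_def scale_def)
  ultimately show "C \<in> affine_chart p N ` (SIGMA D:{0..N}. affine_space p D)"
    by blast
qed

lemma proj_pow_map_affine_chart:
  assumes "prime p" "d > 0" "x \<in> (SIGMA D:{0..N}. affine_space p D)"
  shows "proj_pow_map p d (affine_chart p N x) = affine_chart p N (apsnd (pow_map p d) x)"
proof -
  obtain D y where x: "x = (D, y)" "y \<in> affine_space p D"
    using assms(3) by auto
  have "set (replicate (N - D) 0 @ 1 # y) \<subseteq> {..<p}"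
    using x(2) prime_gt_1_nat[OF assms(1)] by (auto simp: affine_space_def)
  moreover have "pow_map p d (replicate (N - D) 0 @ 1 # y) = replicate (N - D) 0 @ 1 # pow_map p d y"
    using assms(2) prime_gt_1_nat[OF assms(1)] by (simp add: pow_map_def power_0_left)
  ultimately show ?thesis
    using x(1) by (simp add: affine_chart_def proj_pow_map_proj_class[OF assms(1)])
qed

lemma bij_betw_affine_chart:
  "prime p \<Longrightarrow> bij_betw (affine_chart p N) (SIGMA D:{0..N}. affine_space p D) (proj_space p N)"
  by (simp add: bij_betw_def inj_on_affine_chart affine_chart_image)

lemma apsnd_pow_map_Sigma_subset:
  "apsnd (pow_map p d) ` (SIGMA D:A. affine_space p D) \<subseteq> (SIGMA D:A. affine_space p D)"
  by (force simp: affine_space_def pow_map_def intro: mod_less_divisor)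

lemma card_Per_k_proj_pow_map:
  assumes "prime p" "d > 0"
  shows "card (Per_k (proj_pow_map p d) (proj_space p N) k)
       = (\<Sum>D=0..N. card (Per_k (pow_map p d) (affine_space p D) k))"
proof -
  have "card (Per_k (proj_pow_map p d) (proj_space p N) k)
      = card (Per_k (apsnd (pow_map p d)) (SIGMA D:{0..N}. affine_space p D) k)"
    using bij_betw_affine_chart[OF assms(1)] apsnd_pow_map_Sigma_subset proj_pow_map_affine_chart[OF assms]
    by (rule card_Per_k_conj)
  also have "\<dots> = (\<Sum>D=0..N. card (Per_k (pow_map p d) (affine_space p D) k))"
    unfolding Per_k_apsnd
    by (rule card_SigmaI) (auto intro: finite_subset[OF _ finite_affine_space] simp: Per_k_def)
  finally show ?thesis .
qed

lemma card_Per_proj_pow_map: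
  assumes "prime p" "d > 0"
  shows "card (Per (proj_pow_map p d) (proj_space p N))
       = (\<Sum>D=0..N. card (Per (pow_map p d) (affine_space p D)))"
proof -
  have "card (Per (proj_pow_map p d) (proj_space p N))
      = card (Per (apsnd (pow_map p d)) (SIGMA D:{0..N}. affine_space p D))"
    using bij_betw_affine_chart[OF assms(1)] apsnd_pow_map_Sigma_subset proj_pow_map_affine_chart[OF assms]
    by (rule card_Per_conj)
  also have "\<dots> = (\<Sum>D=0..N. card (Per (pow_map p d) (affine_space p D)))"
    unfolding Per_apsnd
    by (rule card_SigmaI) (auto intro: finite_subset[OF _ finite_affine_space] simp: Per_def Per_k_def)
  finally show ?thesis .
qed

theorem mainTheorem3:
  fixes p d N :: nat
  assumes "prime p" and "d > 1" and "N \<ge> 1"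
  defines "m \<equiv> m_minus p d"
  shows "(\<forall>k::nat. k \<ge> 1 \<longrightarrow>
            card (Per_k (pow_map p d) (affine_space p N) k)
              = (if k = 1 then 1 else 0)
                + (\<Sum>I=1..N. \<Sum>ks\<in>{ks \<in> div_tuples m I. Lcm (set (map (\<lambda>e. ord e d) ks)) = k}.
                      (N choose I) * prod_list (map totient ks))
          \<and> card (Per_k (proj_pow_map p d) (proj_space p N) k)
              = (\<Sum>D=0..N. (if k = 1 then 1 else 0)
                + (\<Sum>I=1..D. \<Sum>ks\<in>{ks \<in> div_tuples m I. Lcm (set (map (\<lambda>e. ord e d) ks)) = k}.
                      (D choose I) * prod_list (map totient ks))))
       \<and> card (Per (pow_map p d) (affine_space p N))
           = 1 + (\<Sum>I=1..N. (N choose I) * (\<Sum>ks\<in>div_tuples m I. prod_list (map totient ks)))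
       \<and> 1 + (\<Sum>I=1..N. (N choose I) * (\<Sum>ks\<in>div_tuples m I. prod_list (map totient ks))) = (m + 1) ^ N
       \<and> card (Per (proj_pow_map p d) (proj_space p N))
           = (\<Sum>D=0..N. 1 + (\<Sum>I=1..D. (D choose I) * (\<Sum>ks\<in>div_tuples m I. prod_list (map totient ks))))
       \<and> (\<Sum>D=0..N. 1 + (\<Sum>I=1..D. (D choose I) * (\<Sum>ks\<in>div_tuples m I. prod_list (map totient ks))))
           = (\<Sum>D=0..N. (m + 1) ^ D)"
proof -
  have "d > 0" and "m > 0"
    using assms(2) m_minus_pos[OF prime_gt_1_nat[OF assms(1)]] by (simp_all add: m_def)
  note affine_Per_k = card_Per_k_pow_map[OF assms(1) \<open>d > 0\<close>, folded m_def]
  note affine_Per = card_Per_pow_map[OF assms(1) \<open>d > 0\<close>, folded m_def]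
  note binomial = binomial_sum_div_tuples[OF \<open>m > 0\<close>]
  show ?thesis
    using affine_Per_k affine_Per binomial
      card_Per_k_proj_pow_map[OF assms(1) \<open>d > 0\<close>] card_Per_proj_pow_map[OF assms(1) \<open>d > 0\<close>]
    by simp
qed

end
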